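(* Let $M$ be a system execution satisfying the Lazy Set axioms A0, A1, A2. If $Z$ is an event with $\mathrm{Add}^1(Z)$ or $\mathrm{Rem}^1(Z)$, then $\gamma(Z)<Z$.
   Context: A system execution $M$ consists of: a set of events, partitioned into low-level events (actions) and high-level events; unary predicates $\mathrm{Add},\mathrm{Rem},\mathrm{Cnt}$ on events; a partial order $<$ on events in which every event has finitely many predecessors (and Lamport's finiteness property: for every event $x$ there is a finite set $E$ with $x<y$ for all events $y\notin E$); functions $\mathrm{Begin},\mathrm{End}$ from events to actions with $\mathrm{Begin}(e)=\mathrm{End}(e)=e$ for actions $e$; functions $\chi$ (events $\to\{0,1,f\}$), $\mathrm{val}$ (events $\to\mathbb N$), $\gamma$ (events $\to$ events). For events $X,Y$, $X<Y$ iff $\mathrm{End}(X)<\mathrm{Begin}(Y)$. Notation: $\mathrm{Add}^p(a)$ abbreviates $\mathrm{Add}(a)\wedge\chi(a)=p$, similarly $\mathrm{Rem}^p,\mathrm{Cnt}^p$; $\mathrm{Op}^p(a)$ abbreviates $(\mathrm{Add}(a)\vee\mathrm{Rem}(a)\vee\mathrm{Cnt}(a))\wedge\chi(a)=p$ for $p\in\{0,1\}$. A0: $\mathrm{Add},\mathrm{Rem},\mathrm{Cnt}$ pairwise disjoint; $\mathrm{Add},\mathrm{Rem}$ events are actions, $\mathrm{Cnt}$ events are high-level; $\mathrm{Begin}(X),\mathrm{End}(X)$ are actions; for $\mathrm{Cnt}$ events $E$, $\mathrm{Begin}(E)<\mathrm{End}(E)$; $<$ restricted to actions is linear. A1: for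 every $A$ with $\mathrm{Op}^1(A)$: $\mathrm{Add}^0(\gamma(A))$, $\mathrm{val}(\gamma(A))=\mathrm{val}(A)$, $\gamma(A)<\mathrm{End}(A)$, and no $R$ has $\mathrm{Rem}^1(R)$, $\gamma(R)=\gamma(A)$, $\gamma(A)<R<A$. A2: if $\mathrm{Op}^0(B)$, $\mathrm{Add}^0(A)$, $A<B$, $\mathrm{val}(A)=\mathrm{val}(B)$, then some $R$ has $\mathrm{Rem}^1(R)$, $A=\gamma(R)$, $R<\mathrm{End}(B)$. *)

theory Defs
  imports Main
begin

datatype chival = Chi0 | Chi1 | ChiF

text \<open>A system execution. Events are all elements of the type 'e.
  Act: low-level events (actions); the others are high-level.
  lt: the precedence relation <, on all events.\<close>
definition system_execution ::
  "('e \<Rightarrow> bool) \<Rightarrow> ('e \<Rightarrow> bool) \<Rightarrow> ('e \<Rightarrow> bool) \<Rightarrow> ('e \<Rightarrow> bool) \<Rightarrow>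
   ('e \<Rightarrow> 'e \<Rightarrow> bool) \<Rightarrow> ('e \<Rightarrow> 'e) \<Rightarrow> ('e \<Rightarrow> 'e) \<Rightarrow> bool" where
  "system_execution Act Add Rem Cnt lt Bgn En \<longleftrightarrow>
     (\<forall>x. \<not> lt x x) \<and>
     (\<forall>x y z. lt x y \<longrightarrow> lt y z \<longrightarrow> lt x z) \<and>
     (\<forall>x. finite {y. lt y x}) \<and>
     (\<forall>x. \<exists>E. finite E \<and> (\<forall>y. y \<notin> E \<longrightarrow> lt x y)) \<and>
     (\<forall>e. Act e \<longrightarrow> Bgn e = e \<and> En e = e) \<and>
     (\<forall>X Y. lt X Y \<longleftrightarrow> lt (En X) (Bgn Y))"

definition axiom_A0 ::
  "('e \<Rightarrow> bool) \<Rightarrow> ('e \<Rightarrow> bool) \<Rightarrow> ('e \<Rightarrow> bool) \<Rightarrow> ('e \<Rightarrow> bool) \<Rightarrow>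
   ('e \<Rightarrow> 'e \<Rightarrow> bool) \<Rightarrow> ('e \<Rightarrow> 'e) \<Rightarrow> ('e \<Rightarrow> 'e) \<Rightarrow> bool" where
  "axiom_A0 Act Add Rem Cnt lt Bgn En \<longleftrightarrow>
     (\<forall>x. \<not> (Add x \<and> Rem x) \<and> \<not> (Add x \<and> Cnt x) \<and> \<not> (Rem x \<and> Cnt x)) \<and>
     (\<forall>x. Add x \<longrightarrow> Act x) \<and> (\<forall>x. Rem x \<longrightarrow> Act x) \<and> (\<forall>x. Cnt x \<longrightarrow> \<not> Act x) \<and>
     (\<forall>X. Act (Bgn X) \<and> Act (En X)) \<and>
     (\<forall>E. Cnt E \<longrightarrow> lt (Bgn E) (En E)) \<and>
     (\<forall>a b. Act a \<longrightarrow> Act b \<longrightarrow> a = b \<or> lt a b \<or> lt b a)"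

definition Op ::
  "('e \<Rightarrow> bool) \<Rightarrow> ('e \<Rightarrow> bool) \<Rightarrow> ('e \<Rightarrow> bool) \<Rightarrow> ('e \<Rightarrow> chival) \<Rightarrow> chival \<Rightarrow> 'e \<Rightarrow> bool" where
  "Op Add Rem Cnt chi p a \<longleftrightarrow> (Add a \<or> Rem a \<or> Cnt a) \<and> chi a = p"

definition axiom_A1 ::
  "('e \<Rightarrow> bool) \<Rightarrow> ('e \<Rightarrow> bool) \<Rightarrow> ('e \<Rightarrow> bool) \<Rightarrow> ('e \<Rightarrow> 'e \<Rightarrow> bool) \<Rightarrow> ('e \<Rightarrow> 'e) \<Rightarrow>
   ('e \<Rightarrow> chival) \<Rightarrow> ('e \<Rightarrow> nat) \<Rightarrow> ('e \<Rightarrow> 'e) \<Rightarrow> bool" where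
  "axiom_A1 Add Rem Cnt lt En chi vl gam \<longleftrightarrow>
     (\<forall>A. Op Add Rem Cnt chi Chi1 A \<longrightarrow>
        Add (gam A) \<and> chi (gam A) = Chi0 \<and> vl (gam A) = vl A \<and> lt (gam A) (En A) \<and>
        \<not> (\<exists>R. Rem R \<and> chi R = Chi1 \<and> gam R = gam A \<and> lt (gam A) R \<and> lt R A))"

definition axiom_A2 ::
  "('e \<Rightarrow> bool) \<Rightarrow> ('e \<Rightarrow> bool) \<Rightarrow> ('e \<Rightarrow> bool) \<Rightarrow> ('e \<Rightarrow> 'e \<Rightarrow> bool) \<Rightarrow> ('e \<Rightarrow> 'e) \<Rightarrow>
   ('e \<Rightarrow> chival) \<Rightarrow> ('e \<Rightarrow> nat) \<Rightarrow> ('e \<Rightarrow> 'e) \<Rightarrow> bool" where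
  "axiom_A2 Add Rem Cnt lt En chi vl gam \<longleftrightarrow>
     (\<forall>A B. Op Add Rem Cnt chi Chi0 B \<longrightarrow> Add A \<longrightarrow> chi A = Chi0 \<longrightarrow> lt A B \<longrightarrow> vl A = vl B \<longrightarrow>
        (\<exists>R. Rem R \<and> chi R = Chi1 \<and> A = gam R \<and> lt R (En B)))"

end

theory Submission
  imports Defs
begin

lemma system_execution_End_action:
  assumes "system_execution Act Add Rem Cnt lt Bgn En" and "Act e"
  shows "En e = e"
  using assms unfolding system_execution_def by blast

lemma axiom_A0_update_is_action:
  assumes "axiom_A0 Act Add Rem Cnt lt Bgn En" and "Add e \<or> Rem e"
  shows "Act e"
  using assms unfolding axiom_A0_def by blast

lemma axiom_A1_gam_before_End:
  assumes "axiom_A1 Add Rem Cnt lt En chi vl gam" and "Op Add Rem Cnt chi Chi1 A"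
  shows "lt (gam A) (En A)"
  using assms unfolding axiom_A1_def by blast

theorem lemma3p3:
  fixes Act Add Rem Cnt :: "'e \<Rightarrow> bool"
    and lt :: "'e \<Rightarrow> 'e \<Rightarrow> bool"
    and Bgn En gam :: "'e \<Rightarrow> 'e"
    and chi :: "'e \<Rightarrow> chival"
    and vl :: "'e \<Rightarrow> nat"
  assumes "system_execution Act Add Rem Cnt lt Bgn En"
    and "axiom_A0 Act Add Rem Cnt lt Bgn En"
    and "axiom_A1 Add Rem Cnt lt En chi vl gam"
    and "axiom_A2 Add Rem Cnt lt En chi vl gam"
    and "(Add Z \<and> chi Z = Chi1) \<or> (Rem Z \<and> chi Z = Chi1)"
  shows "lt (gam Z) Z"
proof -
  have "Act Z"
    using axiom_A0_update_is_action [OF assms(2)] assms(5) by blast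
  then have "En Z = Z"
    using system_execution_End_action [OF assms(1)] by blast
  moreover have "Op Add Rem Cnt chi Chi1 Z"
    using assms(5) unfolding Op_def by blast
  then have "lt (gam Z) (En Z)"
    by (rule axiom_A1_gam_before_End [OF assms(3)])
  ultimately show ?thesis
    by simp
qed

end
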